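(* For every $\mathsf{C\text{-}RASP}_+$ program of size $n$, depth $d$, precision $p$ and girth $g$, there is an equivalent $\mathsf{TL}[\Diamond^{-}]$ program of size $O(n\,2^{\mathrm{poly}(p,g,d)})$.
   Context: $\mathsf{C\text{-}RASP}_+$ formulas over a finite alphabet $\Sigma$: $\phi ::= \sigma \mid \neg\phi \mid \phi_1\wedge\phi_2 \mid \sum_{t\in\mathcal T}\alpha_t t\sim k$, terms $t ::= \#[\phi] \mid c$, with $\sigma\in\Sigma$, $\alpha_t,k,c\in\mathbb{N}$, ${\sim}\in\{\ge,>,=,<,\le\}$; $\#[\phi]$ evaluates at $(w,i)$ to $|\{j\in[1,i]: w,j\models\phi\}|$, $c$ to $c$, comparisons are integer comparisons, $w,i\models\sigma$ iff $w_i=\sigma$. $\mathsf{TL}[\Diamond^{-}]$ formulas: $\phi ::= \sigma \mid \neg\phi \mid \phi_1\wedge\phi_2 \mid \Diamond^{-}\phi \mid \Box^{-}\phi$, where $w,i\models\Diamond^{-}\phi$ iff $w,j\models\phi$ for some $j<i$, and $w,i\models\Box^{-}\phi$ iff $w,j\models\phi$ for all $j\le i$. In both logics $w\models\phi$ iff $w,|w|\models\phi$, and equivalent means defining the same language. Programs are straight-line (DAG) representations $(\phi_1,\dots,\phi_m)$ where $\phi_i$ may refer to earlier $\phi_j$; size is the total number of symbols with constants in binary and each reference counted as 1. Depth: $\mathrm{dp}(\sigma)=\mathrm{dp}(c)=0$, $\neg$ preserves depth, $\wedge$ takes the maximum, $\mathrm{dp}(\#[\phi])=\mathrm{dp}(\phi)+1$,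 comparisons take the maximal depth of their terms; a program's depth is the maximum over its lines. Precision is the number of bits needed to encode the largest constant; girth is the maximum number of summands in any sum. *)

theory Defs
  imports Main
begin

fun nbits :: "nat \<Rightarrow> nat" where
  "nbits n = (if n \<le> 1 then 1 else Suc (nbits (n div 2)))"

section \<open>C-RASP+ : syntax with line references (straight-line programs)\<close>

datatype cmp = CGe | CGt | CEq | CLt | CLe

fun cmp_sem :: "cmp \<Rightarrow> nat \<Rightarrow> nat \<Rightarrow> bool" where
  "cmp_sem CGe x k = (x \<ge> k)"
| "cmp_sem CGt x k = (x > k)"
| "cmp_sem CEq x k = (x = k)"
| "cmp_sem CLt x k = (x < k)"
| "cmp_sem CLe x k = (x \<le> k)"

text \<open>A sum is a list of summands (coefficient, term), represented as its own type;
  CRef j refers to program line j.\<close>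
datatype 'a cform = CSym 'a | CNeg "'a cform" | CAnd "'a cform" "'a cform"
  | CCmp "'a csum" cmp nat | CRef nat
and 'a csum = SNil | SCons nat "'a cterm" "'a csum"
and 'a cterm = Count "'a cform" | CConst nat

text \<open>Semantics at position i (1-based) of word w; env j i = value of line j at position i.\<close>
primrec csem :: "(nat \<Rightarrow> nat \<Rightarrow> bool) \<Rightarrow> 'a list \<Rightarrow> 'a cform \<Rightarrow> nat \<Rightarrow> bool"
and cssem :: "(nat \<Rightarrow> nat \<Rightarrow> bool) \<Rightarrow> 'a list \<Rightarrow> 'a csum \<Rightarrow> nat \<Rightarrow> nat"
and ctsem :: "(nat \<Rightarrow> nat \<Rightarrow> bool) \<Rightarrow> 'a list \<Rightarrow> 'a cterm \<Rightarrow> nat \<Rightarrow> nat" where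
  "csem env w (CSym a) i = (1 \<le> i \<and> i \<le> length w \<and> w ! (i - 1) = a)"
| "csem env w (CNeg f) i = (\<not> csem env w f i)"
| "csem env w (CAnd f g) i = (csem env w f i \<and> csem env w g i)"
| "csem env w (CCmp s r k) i = cmp_sem r (cssem env w s i) k"
| "csem env w (CRef j) i = env j i"
| "cssem env w SNil i = 0"
| "cssem env w (SCons a t s) i = a * ctsem env w t i + cssem env w s i"
| "ctsem env w (Count f) i = card {j \<in> {1..i}. csem env w f j}"
| "ctsem env w (CConst c) i = c"

definition cenvs :: "'a cform list \<Rightarrow> 'a list \<Rightarrow> (nat \<Rightarrow> bool) list" where
  "cenvs P w = foldl (\<lambda>E f. E @ [csem (\<lambda>j. if j < length E then E ! j else (\<lambda>_. False)) w f]) [] P"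

definition clang :: "'a cform list \<Rightarrow> 'a list set" where
  "clang P = {w. P \<noteq> [] \<and> last (cenvs P w) (length w)}"

primrec crefs :: "'a cform \<Rightarrow> nat set" and csrefs :: "'a csum \<Rightarrow> nat set"
  and ctrefs :: "'a cterm \<Rightarrow> nat set" where
  "crefs (CSym a) = {}"
| "crefs (CNeg f) = crefs f"
| "crefs (CAnd f g) = crefs f \<union> crefs g"
| "crefs (CCmp s r k) = csrefs s"
| "crefs (CRef j) = {j}"
| "csrefs SNil = {}"
| "csrefs (SCons a t s) = ctrefs t \<union> csrefs s"
| "ctrefs (Count f) = crefs f"
| "ctrefs (CConst c) = {}"

definition cwf :: "'a cform list \<Rightarrow> bool" where
  "cwf P = (P \<noteq> [] \<and> (\<forall>i < length P. crefs (P ! i) \<subseteq> {..<i}))"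

primrec csize :: "'a cform \<Rightarrow> nat" and cssize :: "'a csum \<Rightarrow> nat"
  and ctsize :: "'a cterm \<Rightarrow> nat" where
  "csize (CSym a) = 1"
| "csize (CNeg f) = Suc (csize f)"
| "csize (CAnd f g) = Suc (csize f + csize g)"
| "csize (CCmp s r k) = cssize s + 1 + nbits k"
| "csize (CRef j) = 1"
| "cssize SNil = 0"
| "cssize (SCons a t s) = nbits a + ctsize t + 1 + cssize s"
| "ctsize (Count f) = Suc (csize f)"
| "ctsize (CConst c) = nbits c"

definition cprog_size :: "'a cform list \<Rightarrow> nat" where
  "cprog_size P = sum_list (map csize P)"

primrec cdepth :: "(nat \<Rightarrow> nat) \<Rightarrow> 'a cform \<Rightarrow> nat"
  and csdepth :: "(nat \<Rightarrow> nat) \<Rightarrow> 'a csum \<Rightarrow> nat"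
  and ctdepth :: "(nat \<Rightarrow> nat) \<Rightarrow> 'a cterm \<Rightarrow> nat" where
  "cdepth de (CSym a) = 0"
| "cdepth de (CNeg f) = cdepth de f"
| "cdepth de (CAnd f g) = max (cdepth de f) (cdepth de g)"
| "cdepth de (CCmp s r k) = csdepth de s"
| "cdepth de (CRef j) = de j"
| "csdepth de SNil = 0"
| "csdepth de (SCons a t s) = max (ctdepth de t) (csdepth de s)"
| "ctdepth de (Count f) = Suc (cdepth de f)"
| "ctdepth de (CConst c) = 0"

definition cdepths :: "'a cform list \<Rightarrow> nat list" where
  "cdepths P = foldl (\<lambda>D f. D @ [cdepth (\<lambda>j. if j < length D then D ! j else 0) f]) [] P"

definition cprog_depth :: "'a cform list \<Rightarrow> nat" where
  "cprog_depth P = Max (set (0 # cdepths P))"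

primrec cprec :: "'a cform \<Rightarrow> nat" and csprec :: "'a csum \<Rightarrow> nat"
  and ctprec :: "'a cterm \<Rightarrow> nat" where
  "cprec (CSym a) = 0"
| "cprec (CNeg f) = cprec f"
| "cprec (CAnd f g) = max (cprec f) (cprec g)"
| "cprec (CCmp s r k) = max (nbits k) (csprec s)"
| "cprec (CRef j) = 0"
| "csprec SNil = 0"
| "csprec (SCons a t s) = max (nbits a) (max (ctprec t) (csprec s))"
| "ctprec (Count f) = cprec f"
| "ctprec (CConst c) = nbits c"

definition cprog_prec :: "'a cform list \<Rightarrow> nat" where
  "cprog_prec P = Max (set (0 # map cprec P))"

primrec cslen :: "'a csum \<Rightarrow> nat" where
  "cslen SNil = 0"
| "cslen (SCons a t s) = Suc (cslen s)"

primrec cgirth :: "'a cform \<Rightarrow> nat" and csgirth :: "'a csum \<Rightarrow> nat"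
  and ctgirth :: "'a cterm \<Rightarrow> nat" where
  "cgirth (CSym a) = 0"
| "cgirth (CNeg f) = cgirth f"
| "cgirth (CAnd f g) = max (cgirth f) (cgirth g)"
| "cgirth (CCmp s r k) = max (cslen s) (csgirth s)"
| "cgirth (CRef j) = 0"
| "csgirth SNil = 0"
| "csgirth (SCons a t s) = max (ctgirth t) (csgirth s)"
| "ctgirth (Count f) = cgirth f"
| "ctgirth (CConst c) = 0"

definition cprog_girth :: "'a cform list \<Rightarrow> nat" where
  "cprog_girth P = Max (set (0 # map cgirth P))"

section \<open>TL[past diamond] programs\<close>

datatype 'a tform = TSym 'a | TNeg "'a tform" | TAnd "'a tform" "'a tform"
  | TDia "'a tform" | TBox "'a tform" | TRef nat

fun tsem :: "(nat \<Rightarrow> nat \<Rightarrow> bool) \<Rightarrow> 'a list \<Rightarrow> 'a tform \<Rightarrow> nat \<Rightarrow> bool" where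
  "tsem env w (TSym a) i = (1 \<le> i \<and> i \<le> length w \<and> w ! (i - 1) = a)"
| "tsem env w (TNeg f) i = (\<not> tsem env w f i)"
| "tsem env w (TAnd f g) i = (tsem env w f i \<and> tsem env w g i)"
| "tsem env w (TDia f) i = (\<exists>j. 1 \<le> j \<and> j < i \<and> tsem env w f j)"
| "tsem env w (TBox f) i = (\<forall>j. 1 \<le> j \<and> j \<le> i \<longrightarrow> tsem env w f j)"
| "tsem env w (TRef j) i = env j i"

definition tenvs :: "'a tform list \<Rightarrow> 'a list \<Rightarrow> (nat \<Rightarrow> bool) list" where
  "tenvs P w = foldl (\<lambda>E f. E @ [tsem (\<lambda>j. if j < length E then E ! j else (\<lambda>_. False)) w f]) [] P"

definition tlang :: "'a tform list \<Rightarrow> 'a list set" where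
  "tlang P = {w. P \<noteq> [] \<and> last (tenvs P w) (length w)}"

fun trefs :: "'a tform \<Rightarrow> nat set" where
  "trefs (TSym a) = {}"
| "trefs (TNeg f) = trefs f"
| "trefs (TAnd f g) = trefs f \<union> trefs g"
| "trefs (TDia f) = trefs f"
| "trefs (TBox f) = trefs f"
| "trefs (TRef j) = {j}"

definition twf :: "'a tform list \<Rightarrow> bool" where
  "twf P = (P \<noteq> [] \<and> (\<forall>i < length P. trefs (P ! i) \<subseteq> {..<i}))"

fun tsize :: "'a tform \<Rightarrow> nat" where
  "tsize (TSym a) = 1"
| "tsize (TNeg f) = Suc (tsize f)"
| "tsize (TAnd f g) = Suc (tsize f + tsize g)"
| "tsize (TDia f) = Suc (tsize f)"
| "tsize (TBox f) = Suc (tsize f)"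
| "tsize (TRef j) = 1"

definition tprog_size :: "'a tform list \<Rightarrow> nat" where
  "tprog_size P = sum_list (map tsize P)"

end

theory Submission
  imports Defs
begin

(* A comparison sum_t a_t t ~ K only depends on the values of its terms capped at K + 1,
   since capping every summand preserves min (sum) (K + 1). Hence it is a disjunction, over
   the at most (K + 2)^g tuples of capped values, of statements "the capped value of t is v",
   and #[phi] >= m is expressed by m nested past diamonds. Each level of counting multiplies
   the size by 2^O(p g), so a line of depth d grows by a factor 2^O(p g (d + 1)); references
   are translated to references, so the whole program grows by the same factor. *)

definition ttrue :: "'a tform" where
  "ttrue = TNeg (TAnd (TSym undefined) (TNeg (TSym undefined)))"

definition tfalse :: "'a tform" where
  "tfalse = TNeg ttrue"

definition tor :: "'a tform \<Rightarrow> 'a tform \<Rightarrow> 'a tform" where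
  "tor f g = TNeg (TAnd (TNeg f) (TNeg g))"

fun tdisj :: "'a tform list \<Rightarrow> 'a tform" where
  "tdisj [] = tfalse"
| "tdisj (f # fs) = tor f (tdisj fs)"

fun tat_least_before :: "'a tform \<Rightarrow> nat \<Rightarrow> 'a tform" where
  "tat_least_before f 0 = ttrue"
| "tat_least_before f (Suc m) = TDia (TAnd f (tat_least_before f m))"

fun tat_least :: "'a tform \<Rightarrow> nat \<Rightarrow> 'a tform" where
  "tat_least f 0 = ttrue"
| "tat_least f (Suc m) = TNeg (TBox (TNeg (TAnd f (tat_least_before f m))))"

lemma tsem_ttrue [simp]: "tsem env w ttrue i"
  by (simp add: ttrue_def)

lemma tsem_tfalse [simp]: "\<not> tsem env w tfalse i"
  by (simp add: tfalse_def)

lemma tsem_tdisj [simp]: "tsem env w (tdisj fs) i \<longleftrightarrow> (\<exists>f\<in>set fs. tsem env w f i)"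
  by (induction fs) (auto simp: tor_def)

lemma Suc_le_card_prefix_iff:
  fixes i :: nat
  shows "(\<exists>j. 1 \<le> j \<and> j \<le> i \<and> P j \<and> m \<le> card {k \<in> {1..j-1}. P k})
     \<longleftrightarrow> Suc m \<le> card {k \<in> {1..i}. P k}"
proof (induction i)
  case 0
  then show ?case by auto
next
  case (Suc i)
  have "{k \<in> {1..Suc i}. P k} = {k \<in> {1..i}. P k} \<union> (if P (Suc i) then {Suc i} else {})"
    by (auto simp: le_Suc_eq)
  then have card_Suc: "card {k \<in> {1..Suc i}. P k} = card {k \<in> {1..i}. P k} + (if P (Suc i) then 1 else 0)"
    by auto
  have "(\<exists>j. 1 \<le> j \<and> j \<le> Suc i \<and> P j \<and> m \<le> card {k \<in> {1..j-1}. P k})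
     \<longleftrightarrow> (\<exists>j. 1 \<le> j \<and> j \<le> i \<and> P j \<and> m \<le> card {k \<in> {1..j-1}. P k})
        \<or> (P (Suc i) \<and> m \<le> card {k \<in> {1..i}. P k})"
    by (auto simp: le_Suc_eq)
  then show ?case using Suc card_Suc by auto
qed

lemma tsem_tat_least_before:
  "tsem env w (tat_least_before f m) i \<longleftrightarrow> m \<le> card {k \<in> {1..i-1}. tsem env w f k}"
proof (induction m arbitrary: i)
  case (Suc m)
  then show ?case
    using Suc_le_card_prefix_iff[of "i - 1" "tsem env w f" m] by auto
qed simp

lemma tsem_tat_least:
  "tsem env w (tat_least f m) i \<longleftrightarrow> m \<le> card {k \<in> {1..i}. tsem env w f k}"
proof (cases m)
  case (Suc m')
  then show ?thesis
    using Suc_le_card_prefix_iff[of i "tsem env w f" m'] by (auto simp: tsem_tat_least_before)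
qed simp

primrec cssem_capped :: "(nat \<Rightarrow> nat \<Rightarrow> bool) \<Rightarrow> 'a list \<Rightarrow> nat \<Rightarrow> 'a csum \<Rightarrow> nat \<Rightarrow> nat" where
  "cssem_capped env w K SNil i = 0"
| "cssem_capped env w K (SCons a t s) i =
     a * min (ctsem env w t i) (Suc K) + cssem_capped env w K s i"

lemma min_add_min: "min (min x n + min y n) n = min (x + y) (n :: nat)"
  by (simp add: min_def)

lemma min_mult_min: "min (a * min c n) n = min (a * c) (n :: nat)"
proof (cases "a = 0 \<or> c \<le> n")
  case False
  then have "n \<le> a * n" "n \<le> a * c"
    using le_trans[of n c "a * c"] by simp_all
  with False show ?thesis by (simp add: min_absorb2)
qed (auto simp: min_def)

lemma min_cssem_capped: "min (cssem_capped env w K s i) (Suc K) = min (cssem env w s i) (Suc K)"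
proof (induction s rule: csum.induct[where ?P1.0="\<lambda>_. True" and ?P3.0="\<lambda>_. True"])
  case (SCons a t s)
  then show ?case
    by (metis cssem.simps(2) cssem_capped.simps(2) min_add_min min_mult_min)
qed simp_all

lemma cmp_sem_min_Suc: "cmp_sem r (min x (Suc K)) K \<longleftrightarrow> cmp_sem r x K"
  by (cases r) auto

(* The disjunct for v in the SCons case says min (value of t) (Suc K) = v. *)
primrec tl_of_cform :: "'a cform \<Rightarrow> 'a tform"
  and tl_of_csum :: "'a csum \<Rightarrow> nat \<Rightarrow> (nat \<Rightarrow> bool) \<Rightarrow> 'a tform"
  and tl_of_cterm :: "'a cterm \<Rightarrow> nat \<Rightarrow> 'a tform" where
  "tl_of_cform (CSym a) = TSym a"
| "tl_of_cform (CNeg f) = TNeg (tl_of_cform f)"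
| "tl_of_cform (CAnd f g) = TAnd (tl_of_cform f) (tl_of_cform g)"
| "tl_of_cform (CCmp s r K) = tl_of_csum s K (\<lambda>x. cmp_sem r x K)"
| "tl_of_cform (CRef j) = TRef j"
| "tl_of_csum SNil K R = (if R 0 then ttrue else tfalse)"
| "tl_of_csum (SCons a t s) K R = tdisj (map (\<lambda>v. TAnd
      (if v = Suc K then tl_of_cterm t v
       else TAnd (tl_of_cterm t v) (TNeg (tl_of_cterm t (Suc v))))
      (tl_of_csum s K (\<lambda>x. R (a * v + x)))) [0..<K+2])"
| "tl_of_cterm (Count f) m = tat_least (tl_of_cform f) m"
| "tl_of_cterm (CConst c) m = (if m \<le> c then ttrue else tfalse)"

lemma capped_value_iff:
  fixes c v :: nat
  assumes "v < K + 2"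
  shows "(if v = Suc K then v \<le> c else v \<le> c \<and> \<not> Suc v \<le> c) \<longleftrightarrow> v = min c (Suc K)"
  using assms by auto

lemma tsem_tl_of:
  "tsem env w (tl_of_cform f) i \<longleftrightarrow> csem env w f i"
  "\<And>K R. tsem env w (tl_of_csum s K R) i \<longleftrightarrow> R (cssem_capped env w K s i)"
  "\<And>m. tsem env w (tl_of_cterm t m) i \<longleftrightarrow> m \<le> ctsem env w t i"
proof (induction f and s and t arbitrary: i and i and i)
  case (CCmp s r K)
  then show ?case
    using cmp_sem_min_Suc min_cssem_capped by (metis tl_of_cform.simps(4) csem.simps(4))
next
  case (SCons a t s)
  let ?c = "ctsem env w t i" and ?rest = "cssem_capped env w K s i"
  have "tsem env w (tl_of_csum (SCons a t s) K R) i \<longleftrightarrow>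
      (\<exists>v\<in>{0..<K+2}. (if v = Suc K then v \<le> ?c else v \<le> ?c \<and> \<not> Suc v \<le> ?c)
         \<and> R (a * v + ?rest))"
    unfolding tl_of_csum.simps tsem_tdisj set_map bex_simps(7) set_upt
    by (intro bex_cong refl) (simp add: SCons.IH)
  also have "\<dots> \<longleftrightarrow> (\<exists>v\<in>{0..<K+2}. v = min ?c (Suc K) \<and> R (a * v + ?rest))"
    by (intro bex_cong refl conj_cong capped_value_iff) simp_all
  also have "\<dots> \<longleftrightarrow> R (cssem_capped env w K (SCons a t s) i)"
    by (simp add: less_Suc_eq_le)
  finally show ?case .
next
  case (Count f)
  then show ?case by (simp add: tsem_tat_least)
qed simp_all

lemma tenvs_snoc:
  "tenvs (Q @ [f]) w =
     tenvs Q w @ [tsem (\<lambda>j. if j < length (tenvs Q w) then tenvs Q w ! j else (\<lambda>_. False)) w f]"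
  unfolding tenvs_def by simp

lemma cenvs_snoc:
  "cenvs (P @ [f]) w =
     cenvs P w @ [csem (\<lambda>j. if j < length (cenvs P w) then cenvs P w ! j else (\<lambda>_. False)) w f]"
  unfolding cenvs_def by simp

lemma tenvs_map_tl_of_cform: "tenvs (map tl_of_cform P) w = cenvs P w"
proof (induction P rule: rev_induct)
  case Nil
  then show ?case by (simp add: tenvs_def cenvs_def)
next
  case (snoc f P)
  show ?case
    unfolding map_append list.map tenvs_snoc cenvs_snoc snoc.IH tsem_tl_of(1) ..
qed

lemma tlang_map_tl_of_cform: "tlang (map tl_of_cform P) = clang P"
  by (simp add: tlang_def clang_def tenvs_map_tl_of_cform)

lemma trefs_tdisj: "trefs (tdisj fs) = (\<Union>f\<in>set fs. trefs f)"
  by (induction fs) (auto simp: tor_def tfalse_def ttrue_def)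

lemma trefs_tat_least: "trefs (tat_least f m) \<subseteq> trefs f"
proof -
  have "trefs (tat_least_before f m) \<subseteq> trefs f" for m
    by (induction m) (auto simp: ttrue_def)
  then show ?thesis
    by (cases m) (auto simp: ttrue_def)
qed

lemma trefs_tl_of:
  "trefs (tl_of_cform (f :: 'a cform)) \<subseteq> crefs f"
  "\<And>K R. trefs (tl_of_csum (s :: 'a csum) K R) \<subseteq> csrefs s"
  "\<And>m. trefs (tl_of_cterm (t :: 'a cterm) m) \<subseteq> ctrefs t"
proof (induction f and s and t)
  case (SCons a t s)
  then show ?case by (fastforce simp: trefs_tdisj)
next
  case (Count f)
  then show ?case using trefs_tat_least by fastforce
qed (auto simp: ttrue_def tfalse_def)

lemma twf_map_tl_of_cform: "cwf P \<Longrightarrow> twf (map tl_of_cform P)"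
  unfolding cwf_def twf_def using trefs_tl_of(1) by fastforce

lemma tsize_ttrue [simp]: "tsize ttrue = 5"
  by (simp add: ttrue_def)

lemma tsize_tfalse [simp]: "tsize tfalse = 6"
  by (simp add: tfalse_def)

lemma tsize_tdisj_le:
  assumes "\<And>f. f \<in> set fs \<Longrightarrow> tsize f \<le> B"
  shows "tsize (tdisj fs) \<le> length fs * (B + 4) + 6"
  using assms by (induction fs) (fastforce simp: tor_def)+

lemma tsize_tat_least_before: "tsize (tat_least_before f m) = 5 + m * (tsize f + 2)"
  by (induction m) auto

lemma tsize_tat_least_le: "tsize (tat_least f m) \<le> (m + 1) * (tsize f + 9)"
  by (cases m) (auto simp: tsize_tat_least_before algebra_simps)

lemma tsize_tl_of_csum_SCons_le:
  assumes "\<And>m. m \<le> K + 2 \<Longrightarrow> tsize (tl_of_cterm t m) \<le> T"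
    and "\<And>R'. tsize (tl_of_csum s K R') \<le> S"
  shows "tsize (tl_of_csum (SCons a t s) K R) \<le> (K + 2) * (2 * T + 7 + S) + 6"
proof -
  have disjunct_bound: "tsize (TAnd
      (if v = Suc K then tl_of_cterm t v
       else TAnd (tl_of_cterm t v) (TNeg (tl_of_cterm t (Suc v))))
      (tl_of_csum s K (\<lambda>x. R (a * v + x)))) \<le> 2 * T + 3 + S" if "v < K + 2" for v
    using assms(1)[of v] assms(1)[of "Suc v"] assms(2)[of "\<lambda>x. R (a * v + x)"] that
    by auto
  show ?thesis
    unfolding tl_of_csum.simps
    by (rule order.trans[OF tsize_tdisj_le[where B = "2 * T + 3 + S"]])
      (auto simp del: upt_Suc intro: disjunct_bound)
qed

lemma size_bound_SCons_arith:
  fixes K L l A B W :: nat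
  assumes "K + 3 \<le> L" "4 \<le> L" "L \<le> l" "1 \<le> A" "1 \<le> W"
  shows "(K + 2) * (2 * (2 * L * A * W) + 7 + 8 * l * B * W) + 6 \<le> 8 * (L * l) * (A + B) * W"
proof -
  define T where "T = 2 * L * A * W"
  define S where "S = 8 * l * B * W"
  have "(K + 2) * (2 * T + 7 + S) + 6 \<le> (K + 3) * (2 * T + 7 + S)"
    by (simp add: algebra_simps)
  also have "\<dots> \<le> L * (2 * T + 7 + S)"
    using assms(1) by (rule mult_le_mono1)
  also have "\<dots> \<le> 4 * L * T + L * S"
  proof -
    have "2 * L * 1 * 1 \<le> T"
      unfolding T_def using assms(4,5) by (intro mult_le_mono) simp_all
    with assms(2) have "4 \<le> T"
      by simp
    then show ?thesis by (simp add: algebra_simps)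
  qed
  also have "4 * L * T \<le> 8 * (L * l) * A * W"
  proof -
    have "4 * L * T = 8 * (L * L) * A * W"
      unfolding T_def by (simp add: algebra_simps)
    also have "\<dots> \<le> 8 * (L * l) * A * W"
      using assms(3) by (intro mult_le_mono1 mult_le_mono2)
    finally show ?thesis .
  qed
  also have "L * S = 8 * (L * l) * B * W"
    unfolding S_def by (simp add: algebra_simps)
  finally show ?thesis
    unfolding T_def S_def by (simp add: algebra_simps)
qed

lemma nbits_le_imp_less: "nbits n \<le> p \<Longrightarrow> n < 2 ^ p"
proof (induction n arbitrary: p rule: nbits.induct)
  case (1 n)
  show ?case
  proof (cases "n \<le> 1")
    case True
    with "1.prems" have "(2::nat) ^ 1 \<le> 2 ^ p"
      by (intro power_increasing) simp_all
    with True show ?thesis by simp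
  next
    case False
    with "1.prems" obtain q where "p = Suc q" "nbits (n div 2) \<le> q"
      by (cases p) simp_all
    with "1.IH" False have "n div 2 < 2 ^ q"
      by blast
    with \<open>p = Suc q\<close> show ?thesis by simp
  qed
qed

(* The defining equation of nbits unfolds forever on symbolic arguments. *)
declare nbits.simps [simp del]

(* L exceeds K + 2 for every threshold K of precision p; Z is the blow-up per level of counting. *)
context
  fixes p g L Z :: nat
  assumes L: "2 ^ (p + 2) \<le> L" and Z: "8 * L ^ (g + 1) \<le> Z"
begin

private lemma L_ge_4: "4 \<le> L"
proof -
  have "4 * 2 ^ p \<le> L" "(1::nat) \<le> 2 ^ p"
    using L by (simp_all add: power_add)
  then show ?thesis by linarith
qed

private lemma Z_ge_32: "32 \<le> Z"
proof -
  have "L ^ 1 \<le> L ^ (g + 1)"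
    using L_ge_4 by (intro power_increasing) simp_all
  then have "L \<le> L ^ (g + 1)"
    by simp
  with Z L_ge_4 show ?thesis by linarith
qed

private lemma Z_power_mono: "m \<le> n \<Longrightarrow> Z ^ m \<le> Z ^ n"
  using Z_ge_32 by (intro power_increasing) simp_all

private lemma threshold_bound: "nbits K \<le> p \<Longrightarrow> K + 3 \<le> L"
  using nbits_le_imp_less[of K p] L by (simp add: power_add)

(* The depth is taken with references at depth 0: a line is translated on its own. *)
lemma tsize_tl_of_le:
  "cprec (f :: 'a cform) \<le> p \<Longrightarrow> cgirth f \<le> g \<Longrightarrow>
     tsize (tl_of_cform f) \<le> csize f * Z ^ Suc (cdepth (\<lambda>_. 0) f)"
  "\<And>K R. csprec (s :: 'a csum) \<le> p \<Longrightarrow> csgirth s \<le> g \<Longrightarrow> K + 3 \<le> L \<Longrightarrow>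
     tsize (tl_of_csum s K R) \<le> 8 * L ^ Suc (cslen s) * (cssize s + 1) * Z ^ csdepth (\<lambda>_. 0) s"
  "\<And>m. ctprec (t :: 'a cterm) \<le> p \<Longrightarrow> ctgirth t \<le> g \<Longrightarrow> m < L \<Longrightarrow>
     tsize (tl_of_cterm t m) \<le> 2 * L * (ctsize t + 1) * Z ^ ctdepth (\<lambda>_. 0) t"
proof (induction f and s and t)
  case (CSym a)
  then show ?case using Z_ge_32 by simp
next
  case (CRef j)
  then show ?case using Z_ge_32 by simp
next
  case (CNeg f)
  have "1 \<le> Z ^ Suc (cdepth (\<lambda>_. 0) f)"
    using Z_ge_32 by simp
  with CNeg show ?case by (simp del: power_Suc)
next
  case (CAnd f1 f2)
  let ?W = "Z ^ Suc (cdepth (\<lambda>_. 0) (CAnd f1 f2))"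
  have "tsize (tl_of_cform f1) \<le> csize f1 * Z ^ Suc (cdepth (\<lambda>_. 0) f1)"
    using CAnd by simp
  also have "\<dots> \<le> csize f1 * ?W"
    by (intro mult_le_mono2 Z_power_mono) simp
  finally have f1: "tsize (tl_of_cform f1) \<le> csize f1 * ?W" .
  have "tsize (tl_of_cform f2) \<le> csize f2 * Z ^ Suc (cdepth (\<lambda>_. 0) f2)"
    using CAnd by simp
  also have "\<dots> \<le> csize f2 * ?W"
    by (intro mult_le_mono2 Z_power_mono) simp
  finally have f2: "tsize (tl_of_cform f2) \<le> csize f2 * ?W" .
  have "1 \<le> ?W"
    using Z_ge_32 by simp
  with f1 f2 show ?case by (simp add: add_mult_distrib del: power_Suc)
next
  case (CCmp s r K)
  let ?ds = "csdepth (\<lambda>_. 0) s"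
  have K: "K + 3 \<le> L" and len: "cslen s \<le> g"
    using CCmp.prems threshold_bound by simp_all
  have "tsize (tl_of_cform (CCmp s r K)) \<le> 8 * L ^ Suc (cslen s) * (cssize s + 1) * Z ^ ?ds"
    using CCmp K by simp
  also have "\<dots> \<le> 8 * L ^ (g + 1) * (cssize s + 1) * Z ^ ?ds"
  proof -
    have "L ^ Suc (cslen s) \<le> L ^ (g + 1)"
      using L_ge_4 len by (intro power_increasing) simp_all
    then show ?thesis by (intro mult_le_mono1 mult_le_mono2)
  qed
  also have "\<dots> \<le> Z * (cssize s + 1) * Z ^ ?ds"
    using Z by (intro mult_le_mono1)
  also have "\<dots> = (cssize s + 1) * Z ^ Suc ?ds"
    by (simp add: algebra_simps)
  also have "\<dots> \<le> csize (CCmp s r K) * Z ^ Suc ?ds"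
    by (intro mult_le_mono1) simp
  finally show ?case by simp
next
  case SNil
  then show ?case using L_ge_4 by simp
next
  case (SCons a t s)
  let ?W = "Z ^ csdepth (\<lambda>_. 0) (SCons a t s)" and ?l = "L ^ Suc (cslen s)"
  have "tsize (tl_of_csum (SCons a t s) K R)
      \<le> (K + 2) * (2 * (2 * L * (ctsize t + 1) * ?W) + 7 + 8 * ?l * (cssize s + 1) * ?W) + 6"
  proof (rule tsize_tl_of_csum_SCons_le)
    fix m
    assume "m \<le> K + 2"
    with SCons have "tsize (tl_of_cterm t m) \<le> 2 * L * (ctsize t + 1) * Z ^ ctdepth (\<lambda>_. 0) t"
      by simp
    also have "\<dots> \<le> 2 * L * (ctsize t + 1) * ?W"
      by (intro mult_le_mono2 Z_power_mono) simp
    finally show "tsize (tl_of_cterm t m) \<le> 2 * L * (ctsize t + 1) * ?W" .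
  next
    fix R'
    from SCons have "tsize (tl_of_csum s K R') \<le> 8 * ?l * (cssize s + 1) * Z ^ csdepth (\<lambda>_. 0) s"
      by simp
    also have "\<dots> \<le> 8 * ?l * (cssize s + 1) * ?W"
      by (intro mult_le_mono2 Z_power_mono) simp
    finally show "tsize (tl_of_csum s K R') \<le> 8 * ?l * (cssize s + 1) * ?W" .
  qed
  also have "\<dots> \<le> 8 * (L * ?l) * (ctsize t + 1 + (cssize s + 1)) * ?W"
    using SCons.prems(3) L_ge_4 Z_ge_32 by (intro size_bound_SCons_arith) simp_all
  also have "\<dots> \<le> 8 * L ^ Suc (cslen (SCons a t s)) * (cssize (SCons a t s) + 1) * ?W"
    by (simp add: algebra_simps)
  finally show ?case .
next
  case (Count f)
  let ?W = "Z ^ Suc (cdepth (\<lambda>_. 0) f)"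
  have "tsize (tl_of_cterm (Count f) m) \<le> (m + 1) * (tsize (tl_of_cform f) + 9)"
    using tsize_tat_least_le by simp
  also have "\<dots> \<le> L * (csize f * ?W + ?W)"
  proof (intro mult_le_mono add_mono)
    show "tsize (tl_of_cform f) \<le> csize f * ?W"
      using Count by simp
    show "9 \<le> ?W"
      using Z_ge_32 le_trans[of 9 Z ?W] by simp
  qed (use Count.prems in simp)
  also have "\<dots> \<le> 2 * L * (ctsize (Count f) + 1) * Z ^ ctdepth (\<lambda>_. 0) (Count f)"
    by (simp add: algebra_simps)
  finally show ?case .
next
  case (CConst c)
  then show ?case using L_ge_4 by simp
qed

end

lemma cdepth_zero_le:
  "cdepth (\<lambda>_. 0) (f :: 'a cform) \<le> cdepth de f"
  "csdepth (\<lambda>_. 0) (s :: 'a csum) \<le> csdepth de s"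
  "ctdepth (\<lambda>_. 0) (t :: 'a cterm) \<le> ctdepth de t"
  by (induction f and s and t) (auto simp: le_max_iff_disj)

lemma cdepth_zero_le_cprog_depth:
  assumes "f \<in> set P"
  shows "cdepth (\<lambda>_. 0) f \<le> cprog_depth P"
proof -
  have "\<exists>d\<in>set (cdepths P). cdepth (\<lambda>_. 0) f \<le> d"
    using assms
  proof (induction P rule: rev_induct)
    case (snoc f' P)
    then show ?case
      by (auto simp: cdepths_def cdepth_zero_le(1))
  qed simp
  then show ?thesis
    unfolding cprog_depth_def by (auto intro: le_trans[OF _ Max_ge])
qed

lemma tprog_size_map_tl_of_cform_le:
  "tprog_size (map tl_of_cform P) \<le> cprog_size P *
     2 ^ (((cprog_prec P + 2) * (cprog_girth P + 1) + 3) * (cprog_depth P + 1))"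
proof -
  let ?p = "cprog_prec P" and ?g = "cprog_girth P" and ?D = "cprog_depth P"
  let ?Z = "2 ^ ((?p + 2) * (?g + 1) + 3) :: nat"
  have Z: "8 * (2 ^ (?p + 2)) ^ (?g + 1) \<le> ?Z"
    unfolding power_mult[symmetric] by (simp only: power_add) simp
  have line_bound: "tsize (tl_of_cform f) \<le> csize f * ?Z ^ Suc ?D" if "f \<in> set P" for f
  proof -
    have "cprec f \<le> ?p" "cgirth f \<le> ?g"
      using that unfolding cprog_prec_def cprog_girth_def by (auto intro: Max_ge)
    then have "tsize (tl_of_cform f) \<le> csize f * ?Z ^ Suc (cdepth (\<lambda>_. 0) f)"
      by (rule tsize_tl_of_le(1)[OF order.refl Z])
    also have "\<dots> \<le> csize f * ?Z ^ Suc ?D"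
      using cdepth_zero_le_cprog_depth[OF that] by (intro mult_le_mono2 power_increasing) simp_all
    finally show ?thesis .
  qed
  have "tprog_size (map tl_of_cform P) \<le> (\<Sum>f\<leftarrow>P. csize f * ?Z ^ Suc ?D)"
    unfolding tprog_size_def map_map comp_def using line_bound by (rule sum_list_mono)
  also have "\<dots> = cprog_size P * ?Z ^ Suc ?D"
    unfolding cprog_size_def by (rule sum_list_mult_const)
  also have "?Z ^ Suc ?D = 2 ^ (((?p + 2) * (?g + 1) + 3) * (?D + 1))"
    by (simp only: power_mult Suc_eq_plus1)
  finally show ?thesis .
qed

lemma exponent_le_cube:
  fixes p g d :: nat
  shows "((p + 2) * (g + 1) + 3) * (d + 1) \<le> 5 * (p + g + d + 1) ^ 3"
proof -
  define x where "x = p + g + d + 1"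
  have "(p + 2) * (g + 1) \<le> (2 * x) * x"
    unfolding x_def by (intro mult_le_mono) simp_all
  moreover have "1 \<le> x * x"
    unfolding x_def by simp
  ultimately have "(p + 2) * (g + 1) + 3 \<le> 5 * (x * x)"
    by linarith
  then have "((p + 2) * (g + 1) + 3) * (d + 1) \<le> 5 * (x * x) * x"
    unfolding x_def by (intro mult_le_mono) simp_all
  then show ?thesis
    unfolding x_def[symmetric] by (simp add: power3_eq_cube mult.assoc)
qed

theorem proposition4p4:
  "\<exists>c k :: nat. \<forall>P :: ('a :: finite) cform list. cwf P \<longrightarrow>
     (\<exists>Q :: 'a tform list. twf Q \<and> tlang Q = clang P \<and>
        tprog_size Q \<le> c * cprog_size P *
          2 ^ (c * (cprog_prec P + cprog_girth P + cprog_depth P + 1) ^ k))"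
proof (rule exI[of _ 5], rule exI[of _ 3], intro allI impI)
  fix P :: "'a cform list"
  assume "cwf P"
  let ?x = "cprog_prec P + cprog_girth P + cprog_depth P + 1"
  have "tprog_size (map tl_of_cform P) \<le> cprog_size P *
      2 ^ (((cprog_prec P + 2) * (cprog_girth P + 1) + 3) * (cprog_depth P + 1))"
    by (rule tprog_size_map_tl_of_cform_le)
  also have "\<dots> \<le> 5 * cprog_size P * 2 ^ (5 * ?x ^ 3)"
  proof -
    have "(2::nat) ^ (((cprog_prec P + 2) * (cprog_girth P + 1) + 3) * (cprog_depth P + 1))
        \<le> 2 ^ (5 * ?x ^ 3)"
      by (rule power_increasing[OF exponent_le_cube]) simp
    then show ?thesis
      by (intro mult_le_mono) simp_all
  qed
  finally show "\<exists>Q. twf Q \<and> tlang Q = clang P \<and> tprog_size Q \<le> 5 * cprog_size P * 2 ^ (5 * ?x ^ 3)"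
    using \<open>cwf P\<close> twf_map_tl_of_cform tlang_map_tl_of_cform by blast
qed

end
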